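(* Let $0<r_1<r_2<r_3$ satisfy \[ r_2(r_3-r_1)^3 - r_1(r_3+r_2)^3 - r_3(r_1+r_2)^3 \ \ge\ 0, \] and let $(i,j)\in\{(1,2),(2,3)\}$. For $\beta\in[0,\pi]$ let $\alpha(\beta)$ be the smallest solution $\alpha\in[\pi,2\pi]$ of $g_{13}(\beta)+g_{ij}(\alpha)=0$ (so $\alpha(0)=\alpha(\pi)=\pi$). Set \[\kappa=\frac{g_{13}'(0)}{-g_{ij}'(\pi)}=\frac{r_1r_3\,(r_i+r_j)^3}{r_ir_j\,(r_3-r_1)^3}.\] Then for every $\beta\in(0,\pi)$, \[ \pi\le\alpha(\beta)<\pi+\kappa\beta .\]
   Context: For $i,j\in\{1,2,3\}$ and $\theta\in\mathbb R$ set $D_{ij}(\theta)=r_i^2+r_j^2-2r_ir_j\cos\theta$ and $g_{ij}(\theta)=\dfrac{r_ir_j\sin\theta}{D_{ij}(\theta)^{3/2}}$. (By the comparison $g_{13}\le g_{ij}$ on $[0,\pi]$, the equation defining $\alpha(\beta)$ has a solution in $[\pi,2\pi]$, and $\kappa$ equals the derivative of $\alpha$ at $0$.) *)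

theory Defs
  imports "HOL-Analysis.Analysis"
begin

text \<open>D_ij(theta) and g_ij(theta), written in terms of the two radii r_i, r_j.\<close>
definition Dfun :: "real \<Rightarrow> real \<Rightarrow> real \<Rightarrow> real" where
  "Dfun ri rj \<theta> = ri^2 + rj^2 - 2 * ri * rj * cos \<theta>"

definition gfun :: "real \<Rightarrow> real \<Rightarrow> real \<Rightarrow> real" where
  "gfun ri rj \<theta> = ri * rj * sin \<theta> / (Dfun ri rj \<theta>) powr (3/2)"

end

theory Submission
  imports Defs
begin

text \<open>
  Write \<open>\<kappa>\<close> for the claimed slope. The hypothesis on the radii is exactly what makes
  \<open>\<kappa> < 1\<close>. The function \<open>F(\<alpha>) = g\<^sub>1\<^sub>3(\<beta>) + g\<^sub>i\<^sub>j(\<alpha>)\<close> is positive at \<open>\<alpha> = \<pi>\<close>, and it is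
  negative at \<open>\<alpha> = \<pi> + \<kappa>\<beta>\<close>: there \<open>g\<^sub>1\<^sub>3(\<beta>) < r\<^sub>1r\<^sub>3 sin \<beta> / (r\<^sub>3 - r\<^sub>1)\<^sup>3\<close> and
  \<open>-g\<^sub>i\<^sub>j(\<pi> + t) \<ge> r\<^sub>ir\<^sub>j sin t / (r\<^sub>i + r\<^sub>j)\<^sup>3\<close>, and concavity of \<open>sin\<close> on \<open>[0, \<pi>]\<close> gives
  \<open>\<kappa> sin \<beta> \<le> sin (\<kappa>\<beta>)\<close>. By the intermediate value theorem \<open>F\<close> vanishes in
  \<open>[\<pi>, \<pi> + \<kappa>\<beta>)\<close>, and the zero set of \<open>F\<close> in \<open>[\<pi>, 2\<pi>]\<close> is closed, so it has a least element.
\<close>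

lemma mult_sin_le_sin_mult:
  fixes k b :: real
  assumes "0 < k" "k < 1" "0 < b" "b \<le> pi"
  shows "k * sin b \<le> sin (k * b)"
proof -
  define x where "x = k * b"
  have x0: "0 < x" and xb: "x < b" using assms by (auto simp: x_def)
  obtain e where e: "0 < e" "e < x" "sin x - sin 0 = (x - 0) * cos e"
    using MVT2[OF x0, of sin cos] by (auto intro: DERIV_sin)
  obtain z where z: "x < z" "z < b" "sin b - sin x = (b - x) * cos z"
    using MVT2[OF xb, of sin cos] by (auto intro: DERIV_sin)
  have "cos z \<le> cos e" using e z assms by (intro cos_monotone_0_pi_le) auto
  hence "sin b \<le> sin x + (b - x) * cos e"
    using z xb mult_left_mono[of "cos z" "cos e" "b - x"] by linarith
  hence "x * sin b \<le> x * (sin x + (b - x) * cos e)" using x0 by (intro mult_left_mono) auto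
  also have "\<dots> = b * sin x" using e by (simp add: algebra_simps)
  finally have "b * (k * sin b) \<le> b * sin x" by (simp add: x_def algebra_simps)
  thus ?thesis using assms by (simp add: x_def)
qed

lemma power2_powr_three_halves:
  fixes y :: real
  assumes "0 < y"
  shows "(y\<^sup>2) powr (3/2) = y ^ 3"
proof -
  have "(y\<^sup>2) powr (3/2) = (y powr 2) powr (3/2)" using assms by (simp add: powr_realpow)
  also have "\<dots> = y powr 3" by (simp add: powr_powr)
  also have "\<dots> = y ^ 3" using assms by (simp add: powr_realpow)
  finally show ?thesis .
qed

lemma Dfun_pos:
  assumes "0 < ri" "ri < rj"
  shows "0 < Dfun ri rj t"
proof -
  have "ri * rj * cos t \<le> ri * rj" using assms by (simp add: mult_left_le)
  moreover have "0 < (rj - ri)\<^sup>2" using assms by simp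
  ultimately show ?thesis unfolding Dfun_def by (simp add: power2_eq_square algebra_simps)
qed

lemma continuous_on_gfun:
  assumes "0 < ri" "ri < rj"
  shows "continuous_on S (gfun ri rj)"
  using Dfun_pos[OF assms] unfolding gfun_def Dfun_def
  by (intro continuous_intros) (auto simp: less_le)

lemma gfun_pi [simp]: "gfun ri rj pi = 0"
  by (simp add: gfun_def)

lemma gfun_pos:
  assumes "0 < ri" "ri < rj" "0 < t" "t < pi"
  shows "0 < gfun ri rj t"
proof -
  have "0 < sin t" using assms(3,4) by (rule sin_gt_zero)
  thus ?thesis unfolding gfun_def using Dfun_pos[OF assms(1,2), of t] assms(1,2)
    by (intro divide_pos_pos mult_pos_pos) auto
qed

lemma gfun_less:
  assumes "0 < ri" "ri < rj" "0 < t" "t < pi"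
  shows "gfun ri rj t < ri * rj * sin t / (rj - ri) ^ 3"
proof -
  have "cos t < 1" using assms(3,4) cos_monotone_0_pi[of 0 t] by simp
  hence "(rj - ri)\<^sup>2 < Dfun ri rj t"
    using assms(1,2) unfolding Dfun_def by (simp add: power2_eq_square algebra_simps)
  hence "((rj - ri)\<^sup>2) powr (3/2) < Dfun ri rj t powr (3/2)"
    by (intro powr_less_mono2) auto
  hence "(rj - ri) ^ 3 < Dfun ri rj t powr (3/2)"
    using assms(2) by (simp add: power2_powr_three_halves)
  moreover have "0 < (rj - ri) ^ 3" "0 < ri * rj * sin t"
    using assms by (auto simp: sin_gt_zero)
  ultimately show ?thesis unfolding gfun_def using Dfun_pos[OF assms(1,2), of t]
    by (intro divide_strict_left_mono) (auto simp: zero_less_mult_iff)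
qed

lemma gfun_pi_plus_le:
  assumes "0 < ri" "ri < rj" "0 \<le> t" "t \<le> pi"
  shows "ri * rj * sin t / (ri + rj) ^ 3 \<le> - gfun ri rj (pi + t)"
proof -
  have "ri * rj * cos t \<le> ri * rj" using assms by (simp add: mult_left_le)
  hence "Dfun ri rj (pi + t) \<le> (ri + rj)\<^sup>2"
    unfolding Dfun_def by (simp add: power2_eq_square algebra_simps)
  hence "Dfun ri rj (pi + t) powr (3/2) \<le> ((ri + rj)\<^sup>2) powr (3/2)"
    using Dfun_pos[OF assms(1,2), of "pi + t"] by (intro powr_mono2) auto
  hence "Dfun ri rj (pi + t) powr (3/2) \<le> (ri + rj) ^ 3"
    using assms(1,2) by (simp add: power2_powr_three_halves)
  moreover have "0 \<le> sin t" using assms(3,4) by (simp add: sin_ge_zero)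
  ultimately show ?thesis
    unfolding gfun_def using assms(1,2) Dfun_pos[OF assms(1,2), of "pi + t"]
    by (simp, intro divide_left_mono) auto
qed

lemma slope_less_one:
  fixes r1 r2 r3 ri rj :: real
  assumes "0 < r1" "r1 < r2" "r2 < r3"
    and "r2 * (r3 - r1)^3 - r1 * (r3 + r2)^3 - r3 * (r1 + r2)^3 \<ge> 0"
    and "(ri, rj) = (r1, r2) \<or> (ri, rj) = (r2, r3)"
  shows "r1 * r3 * (ri + rj)^3 < ri * rj * (r3 - r1)^3"
proof -
  have "0 < r1 * (r3 + r2)^3" "0 < r3 * (r1 + r2)^3" using assms(1-3) by auto
  hence "r3 * (r1 + r2)^3 < r2 * (r3 - r1)^3" "r1 * (r3 + r2)^3 < r2 * (r3 - r1)^3"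
    using assms(4) by linarith+
  hence "r1 * (r3 * (r1 + r2)^3) < r1 * (r2 * (r3 - r1)^3)"
    "r3 * (r1 * (r3 + r2)^3) < r3 * (r2 * (r3 - r1)^3)"
    using assms(1-3) by simp_all
  thus ?thesis using assms(5) by (auto simp: algebra_simps)
qed

lemma sum_gfun_neg_at_slope:
  fixes r1 r3 ri rj \<kappa> :: real
  assumes "0 < r1" "r1 < r3" "0 < ri" "ri < rj"
    and \<kappa>: "\<kappa> = (r1 * r3 * (ri + rj)^3) / (ri * rj * (r3 - r1)^3)" "0 < \<kappa>" "\<kappa> < 1"
    and "0 < \<beta>" "\<beta> < pi"
  shows "gfun r1 r3 \<beta> + gfun ri rj (pi + \<kappa> * \<beta>) < 0"
proof -
  have "\<kappa> * \<beta> \<le> pi" using \<kappa>(3) assms(8,9) mult_strict_right_mono[of \<kappa> 1 \<beta>] by linarith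
  hence "ri * rj * sin (\<kappa> * \<beta>) / (ri + rj)^3 \<le> - gfun ri rj (pi + \<kappa> * \<beta>)"
    using assms(3,4,8) \<kappa>(2) by (intro gfun_pi_plus_le) auto
  moreover have "ri * rj * (\<kappa> * sin \<beta>) / (ri + rj)^3 \<le> ri * rj * sin (\<kappa> * \<beta>) / (ri + rj)^3"
    using mult_sin_le_sin_mult[of \<kappa> \<beta>] assms(3,4,8,9) \<kappa>(2,3)
    by (intro divide_right_mono mult_left_mono) auto
  moreover have "ri * rj * (\<kappa> * sin \<beta>) / (ri + rj)^3 = r1 * r3 * sin \<beta> / (r3 - r1)^3"
    unfolding \<kappa>(1) using assms(2-4) by (simp add: field_simps)
  ultimately show ?thesis using gfun_less[of r1 r3 \<beta>] assms(1,2,8,9) by linarith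
qed

lemma is_arg_min_zero_le:
  fixes F :: "real \<Rightarrow> real"
  assumes "continuous_on {a..b} F" "x \<in> {a..b}" "F x = 0"
  shows "\<exists>m. is_arg_min (\<lambda>x. x) (\<lambda>x. x \<in> {a..b} \<and> F x = 0) m \<and> m \<le> x"
proof -
  define Z where "Z = {x \<in> {a..b}. F x = 0}"
  have "closed Z" unfolding Z_def using assms(1) by (intro continuous_closed_preimage_constant) auto
  moreover have "bdd_below Z" "x \<in> Z" using assms(2,3) by (auto simp: Z_def intro: bdd_belowI[of _ a])
  ultimately have "Inf Z \<in> Z" "\<And>y. y \<in> Z \<Longrightarrow> Inf Z \<le> y"
    using closed_contains_Inf cInf_lower by blast+
  hence "is_arg_min (\<lambda>x. x) (\<lambda>x. x \<in> {a..b} \<and> F x = 0) (Inf Z)"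
    unfolding is_arg_min_linorder Z_def by blast
  with \<open>x \<in> Z\<close> \<open>\<And>y. y \<in> Z \<Longrightarrow> Inf Z \<le> y\<close> show ?thesis by blast
qed

theorem lemma2p5:
  fixes r1 r2 r3 ri rj :: real
  assumes "0 < r1" "r1 < r2" "r2 < r3"
    and "r2 * (r3 - r1)^3 - r1 * (r3 + r2)^3 - r3 * (r1 + r2)^3 \<ge> 0"
    and "(ri, rj) = (r1, r2) \<or> (ri, rj) = (r2, r3)"
    and "0 < \<beta>" "\<beta> < pi"
  shows "\<exists>a. is_arg_min (\<lambda>x. x)
                 (\<lambda>x. x \<in> {pi..2*pi} \<and> gfun r1 r3 \<beta> + gfun ri rj x = 0) a
           \<and> pi \<le> a
           \<and> a < pi + (r1 * r3 * (ri + rj)^3) / (ri * rj * (r3 - r1)^3) * \<beta>"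
proof -
  define \<kappa> where "\<kappa> = (r1 * r3 * (ri + rj)^3) / (ri * rj * (r3 - r1)^3)"
  define F where "F = (\<lambda>x. gfun r1 r3 \<beta> + gfun ri rj x)"
  have ri: "0 < ri" "ri < rj" using assms(1-3,5) by auto
  have \<kappa>: "0 < \<kappa>" "\<kappa> < 1"
    using slope_less_one[OF assms(1-5)] ri assms(1-3) by (auto simp: \<kappa>_def)
  have "\<kappa> * \<beta> < \<beta>" using mult_strict_right_mono[OF \<kappa>(2) assms(6)] by simp
  hence slope: "0 < \<kappa> * \<beta>" "\<kappa> * \<beta> < pi" using \<kappa>(1) assms(6,7) by (simp, linarith)
  have neg: "F (pi + \<kappa> * \<beta>) < 0"
    unfolding F_def using assms(1-3,6,7) \<kappa> by (intro sum_gfun_neg_at_slope[OF _ _ ri \<kappa>_def]) auto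
  have pos: "0 < F pi" unfolding F_def using assms(1-3,6,7) by (simp add: gfun_pos)
  have contF: "continuous_on S F" for S
    unfolding F_def using continuous_on_gfun[OF ri] by (intro continuous_intros)
  obtain x where x: "pi \<le> x" "x \<le> pi + \<kappa> * \<beta>" "F x = 0"
    using IVT2'[of F "pi + \<kappa> * \<beta>" 0 pi, OF _ _ _ contF] neg pos slope by auto
  have "x \<noteq> pi + \<kappa> * \<beta>" using neg x(3) by auto
  with x(2) have "x < pi + \<kappa> * \<beta>" by simp
  have "x \<in> {pi..2*pi}" using x(1,2) slope(2) by simp
  then obtain m where m: "is_arg_min (\<lambda>x. x) (\<lambda>x. x \<in> {pi..2*pi} \<and> F x = 0) m" "m \<le> x"
    using is_arg_min_zero_le[OF contF _ x(3)] by blast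
  have "pi \<le> m" using m(1) by (simp add: is_arg_min_linorder)
  moreover have "m < pi + \<kappa> * \<beta>" using m(2) \<open>x < pi + \<kappa> * \<beta>\<close> by linarith
  ultimately show ?thesis using m(1) unfolding F_def \<kappa>_def by (intro exI[of _ m] conjI)
qed

end
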